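(* Consider the binary SNR model with users $k\in\mathcal{K}$, resource blocks $r\in\mathcal{R}$, a 0/1 matrix $(\delta_r^k)$, positive integers $d_k$, and all utilities $w^k=1$. Let $d=\max_{k\in\mathcal{K}}d_k$. The GREEDY algorithm processes users in decreasing order of utility (ties broken randomly); when processing user $k$, if at least $d_k$ resource blocks that are active for $k$ ($\delta_r^k=1$) are still unassigned, it assigns $d_k$ of them, chosen at random, to user $k$ and admits $k$; otherwise user $k$ is rejected and assigned nothing. Then the number of users admitted by GREEDY is at least $\frac{1}{d+1}$ times the optimal value of $\max\sum_k z^k$ over $x_r^k\in\{0,1\}$, $z^k\in\{0,1\}$ subject to $\sum_k x_r^k\le1$ for every $r$, $\sum_r x_r^k\ge d_k z^k$ for every $k$, and $x_r^k\le\delta_r^k$ for all $(r,k)$.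
   Context: $x_r^k=1$ means resource block $r$ is assigned to user $k$; $\delta_r^k=1$ means block $r$ is active for user $k$; $z^k=1$ means user $k$ is admitted, which requires at least $d_k$ assigned active blocks; each block goes to at most one user. *)

theory Defs
  imports Complex_Main
begin

definition snr_feasible ::
  "'k set \<Rightarrow> 'r set \<Rightarrow> ('k \<Rightarrow> 'r \<Rightarrow> nat) \<Rightarrow> ('k \<Rightarrow> nat)
   \<Rightarrow> ('k \<Rightarrow> 'r \<Rightarrow> nat) \<Rightarrow> ('k \<Rightarrow> nat) \<Rightarrow> bool" where
  "snr_feasible K R delta dem x z \<longleftrightarrow>
     (\<forall>k\<in>K. \<forall>r\<in>R. x k r \<in> {0,1}) \<and> (\<forall>k\<in>K. z k \<in> {0,1}) \<and>
     (\<forall>r\<in>R. (\<Sum>k\<in>K. x k r) \<le> 1) \<and>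
     (\<forall>k\<in>K. (\<Sum>r\<in>R. x k r) \<ge> dem k * z k) \<and>
     (\<forall>k\<in>K. \<forall>r\<in>R. x k r \<le> delta k r)"

definition snr_opt ::
  "'k set \<Rightarrow> 'r set \<Rightarrow> ('k \<Rightarrow> 'r \<Rightarrow> nat) \<Rightarrow> ('k \<Rightarrow> nat) \<Rightarrow> nat" where
  "snr_opt K R delta dem =
     Max {(\<Sum>k\<in>K. z k) | x z. snr_feasible K R delta dem x z}"

text \<open>The users are processed in the order of the list
  (a list of the users; with all utilities equal, every order is a valid tie-breaking). When processing user k: if at least dem k active unassigned blocks remain,
  an arbitrary (random) subset S of exactly dem k of them is assigned to k and k is admitted;
  otherwise k is rejected.\<close>
inductive greedy_run ::
  "'r set \<Rightarrow> ('k \<Rightarrow> 'r \<Rightarrow> nat) \<Rightarrow> ('k \<Rightarrow> nat) \<Rightarrow> 'k list \<Rightarrow> 'r set \<Rightarrow> 'k set \<Rightarrow> bool"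
  for R delta dem where
  start: "greedy_run R delta dem [] {} {}"
| admit: "greedy_run R delta dem ks U A \<Longrightarrow>
          card ({r\<in>R. delta k r = 1} - U) \<ge> dem k \<Longrightarrow>
          S \<subseteq> {r\<in>R. delta k r = 1} - U \<Longrightarrow> card S = dem k \<Longrightarrow>
          greedy_run R delta dem (ks @ [k]) (U \<union> S) (insert k A)"
| reject: "greedy_run R delta dem ks U A \<Longrightarrow>
          card ({r\<in>R. delta k r = 1} - U) < dem k \<Longrightarrow>
          greedy_run R delta dem (ks @ [k]) U A"

end

theory Submission
  imports Defs
begin

text \<open>Fix an optimal solution and let \<open>B k\<close> be the blocks it gives to an admitted user \<open>k\<close>.
  Whenever GREEDY rejects such a user, fewer than \<open>d\<^sub>k \<le> |B k|\<close> of its active blocks are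
  free, so \<open>B k\<close> contains a block assigned by GREEDY. The sets \<open>B k\<close> are disjoint, hence the
  optimal users rejected by GREEDY are at most as many as the assigned blocks, which are at
  most \<open>d\<close> times the number of users GREEDY admits.\<close>

lemma greedy_run_subset:
  assumes "greedy_run R delta dem ks U A"
  shows "U \<subseteq> R" and "A \<subseteq> set ks"
  using assms by (induction rule: greedy_run.induct) auto

lemma greedy_run_card_assigned:
  assumes "greedy_run R delta dem ks U A" and "distinct ks"
  shows "card U \<le> (\<Sum>k\<in>A. dem k)"
  using assms
proof (induction rule: greedy_run.induct)
  case start
  then show ?case by simp
next
  case (admit ks U A k S)
  have "A \<subseteq> set ks"
    using admit.hyps(1) by (rule greedy_run_subset)
  moreover have "k \<notin> set ks"
    using admit.prems by simp
  ultimately have "k \<notin> A" and "finite A"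
    by (auto intro: finite_subset)
  then have "(\<Sum>a\<in>insert k A. dem a) = dem k + (\<Sum>a\<in>A. dem a)"
    by simp
  moreover have "card U \<le> (\<Sum>a\<in>A. dem a)"
    using admit.IH admit.prems by simp
  ultimately show ?case
    using card_Un_le[of U S] admit.hyps(4) by linarith
qed simp

lemma greedy_run_rejected:
  assumes "greedy_run R delta dem ks U A" and "finite R" and "k \<in> set ks - A"
  shows "card ({r\<in>R. delta k r = 1} - U) < dem k"
  using assms(1,3)
proof (induction rule: greedy_run.induct)
  case (admit ks U A k' S)
  have "card ({r\<in>R. delta k r = 1} - (U \<union> S)) \<le> card ({r\<in>R. delta k r = 1} - U)"
    using assms(2) by (intro card_mono) auto
  moreover have "card ({r\<in>R. delta k r = 1} - U) < dem k"
    using admit.IH admit.prems by simp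
  ultimately show ?case
    by linarith
qed auto

lemma card_le_card_if_disjoint_family_hits:
  assumes "finite U"
    and "\<And>i. i \<in> I \<Longrightarrow> B i \<inter> U \<noteq> {}"
    and "\<And>i j. i \<in> I \<Longrightarrow> j \<in> I \<Longrightarrow> i \<noteq> j \<Longrightarrow> B i \<inter> B j = {}"
  shows "card I \<le> card U"
proof -
  define pick where "pick i = (SOME u. u \<in> B i \<inter> U)" for i
  have pick: "pick i \<in> B i \<inter> U" if "i \<in> I" for i
    unfolding pick_def using assms(2)[OF that] by (metis some_in_eq)
  have "inj_on pick I"
  proof (rule inj_onI)
    fix i j
    assume "i \<in> I" "j \<in> I" "pick i = pick j"
    then have "pick i \<in> B i \<inter> B j"
      using pick by (metis IntD1 IntI)
    then show "i = j"
      using assms(3) \<open>i \<in> I\<close> \<open>j \<in> I\<close> by auto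
  qed
  moreover have "pick ` I \<subseteq> U"
    using pick by blast
  ultimately show ?thesis
    using assms(1) by (rule card_inj_on_le)
qed

lemma snr_feasible_zero: "snr_feasible K R delta dem (\<lambda>_ _. 0) (\<lambda>_. 0)"
  by (simp add: snr_feasible_def)

lemma snr_opt_attained:
  assumes "finite K"
  obtains x z where "snr_feasible K R delta dem x z"
    and "snr_opt K R delta dem = card {k\<in>K. z k = 1}"
proof -
  let ?vals = "{(\<Sum>k\<in>K. z k) | x z. snr_feasible K R delta dem x z}"
  have count: "(\<Sum>k\<in>K. z k) = card {k\<in>K. z k = 1}"
    if "snr_feasible K R delta dem x z" for x z
  proof -
    have "(\<Sum>k\<in>K. z k) = (\<Sum>k\<in>{k\<in>K. z k = 1}. 1)"
      using that assms by (intro sum.mono_neutral_cong_right) (auto simp: snr_feasible_def)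
    then show ?thesis
      by simp
  qed
  have "?vals \<subseteq> {..card K}"
    using count by (force intro: card_mono assms)
  moreover have "?vals \<noteq> {}"
    using snr_feasible_zero by blast
  ultimately have "snr_opt K R delta dem \<in> ?vals"
    unfolding snr_opt_def by (intro Max_in) (auto intro: finite_subset)
  then show ?thesis
    using that count by auto
qed

context
  fixes K R delta dem x z
  assumes feasible: "snr_feasible K R delta dem x z"
begin

lemma snr_feasible_blocks_disjoint:
  assumes "finite K" and "k \<in> K" and "k' \<in> K" and "k \<noteq> k'"
  shows "{r\<in>R. x k r = 1} \<inter> {r\<in>R. x k' r = 1} = {}"
proof (rule ccontr)
  assume "{r\<in>R. x k r = 1} \<inter> {r\<in>R. x k' r = 1} \<noteq> {}"
  then obtain r where r: "r \<in> R" "x k r = 1" "x k' r = 1"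
    by blast
  have "(\<Sum>i\<in>{k, k'}. x i r) \<le> (\<Sum>i\<in>K. x i r)"
    using assms by (intro sum_mono2) auto
  moreover have "(\<Sum>i\<in>K. x i r) \<le> 1"
    using feasible r(1) by (simp add: snr_feasible_def)
  ultimately show False
    using assms(4) r by simp
qed

lemma snr_feasible_blocks_active:
  assumes "\<forall>k\<in>K. \<forall>r\<in>R. delta k r \<in> {0, 1}" and "k \<in> K"
  shows "{r\<in>R. x k r = 1} \<subseteq> {r\<in>R. delta k r = 1}"
  using feasible assms unfolding snr_feasible_def by fastforce

lemma snr_feasible_card_blocks:
  assumes "finite R" and "k \<in> K" and "z k = 1"
  shows "dem k \<le> card {r\<in>R. x k r = 1}"
proof -
  have "(\<Sum>r\<in>R. x k r) = (\<Sum>r\<in>{r\<in>R. x k r = 1}. 1)"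
    using feasible assms
    by (intro sum.mono_neutral_cong_right) (auto simp: snr_feasible_def, fastforce)
  then show ?thesis
    using feasible assms by (auto simp: snr_feasible_def)
qed

end

theorem proposition2:
  fixes K :: "'k set" and R :: "'r set"
    and delta :: "'k \<Rightarrow> 'r \<Rightarrow> nat" and dem :: "'k \<Rightarrow> nat"
    and order :: "'k list" and U :: "'r set" and A :: "'k set"
  assumes "finite K" and "finite R"
    and "\<forall>k\<in>K. \<forall>r\<in>R. delta k r \<in> {0, 1}"
    and "\<forall>k\<in>K. dem k > 0"
    and "distinct order" and "set order = K"
    and "greedy_run R delta dem order U A"
  shows "real (card A) \<ge> real (snr_opt K R delta dem) / real (Max (dem ` K) + 1)"
proof -
  let ?d = "Max (dem ` K)"
  obtain x z where feasible: "snr_feasible K R delta dem x z"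
    and opt: "snr_opt K R delta dem = card {k\<in>K. z k = 1}"
    using snr_opt_attained[OF assms(1)] .
  let ?Opt = "{k\<in>K. z k = 1}" and ?B = "\<lambda>k. {r\<in>R. x k r = 1}"
  have "A \<subseteq> K" and "finite U"
    using greedy_run_subset[OF assms(7)] assms(1,2,6) by (auto intro: finite_subset)
  have "?B k \<inter> U \<noteq> {}" if "k \<in> ?Opt - A" for k
  proof
    assume "?B k \<inter> U = {}"
    then have "?B k \<subseteq> {r\<in>R. delta k r = 1} - U"
      using snr_feasible_blocks_active[OF feasible assms(3)] that by auto
    then have "card (?B k) \<le> card ({r\<in>R. delta k r = 1} - U)"
      using assms(2) by (intro card_mono) auto
    also have "\<dots> < dem k"
      using greedy_run_rejected[OF assms(7,2)] assms(6) that by blast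
    finally have "card (?B k) < dem k" .
    then show False
      using snr_feasible_card_blocks[OF feasible assms(2)] that by fastforce
  qed
  then have "card (?Opt - A) \<le> card U"
    using snr_feasible_blocks_disjoint[OF feasible assms(1)] \<open>finite U\<close>
    by (intro card_le_card_if_disjoint_family_hits) auto
  also have "\<dots> \<le> (\<Sum>k\<in>A. dem k)"
    using greedy_run_card_assigned[OF assms(7,5)] .
  also have "\<dots> \<le> card A * ?d"
  proof -
    have "dem k \<le> ?d" if "k \<in> A" for k
      using that \<open>A \<subseteq> K\<close> assms(1) by (intro Max_ge) auto
    then show ?thesis
      using sum_bounded_above[of A dem ?d] by simp
  qed
  finally have "card (?Opt - A) \<le> card A * ?d" .
  have "card ?Opt \<le> card ((?Opt - A) \<union> A)"
    using assms(1) \<open>A \<subseteq> K\<close> by (intro card_mono) (auto intro: finite_subset)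
  also have "\<dots> \<le> card (?Opt - A) + card A"
    by (rule card_Un_le)
  also have "\<dots> \<le> card A * (?d + 1)"
    using \<open>card (?Opt - A) \<le> card A * ?d\<close> by simp
  finally have "real (card ?Opt) \<le> real (card A) * real (?d + 1)"
    by (metis of_nat_le_iff of_nat_mult)
  then show ?thesis
    unfolding opt by (simp add: divide_le_eq)
qed

end
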